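(* When $\operatorname{char}(\Bbbk) = 0$, the linear map $ \textbf{W} \to \Bbbk$ with $[w,n]\mapsto \frac{1}{\ell(w)!}$ for $[w,n] \in \mathbb{W}$ is an algebra morphism.
   Context: Let $\Bbbk$ be a field. A word is a finite sequence of positive integers; $\ell(w)$ is its length. Let $\textsf{Shuffle}$ be the $\Bbbk$-vector space with basis all words. For a word $w=w_1\cdots w_m$ with $\max(w)\le n\in\mathbb{N}$, let $[w,n]$ be the linear endomorphism of $\textsf{Shuffle}$ sending a word $v$ of length $n$ to $v_{w_1}\cdots v_{w_m}$ and all other words to $0$; $\mathbb{W}$ is the set of all such $[w,n]$ and $\textbf{W}$ their span (they form a basis). $\textbf{W}$ is an algebra with product $\nabla_{\sqcup\!\sqcup}([v,m]\otimes[w,n]) = [v\sqcup\!\sqcup (w\uparrow m), m+n]$, where $\sqcup\!\sqcup$ is the shuffle product of words and $w\uparrow m$ adds $m$ to each letter of $w$, and unit $[\emptyset,0]$. *)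

theory Defs
  imports Main "HOL-Library.Multiset"
begin

text \<open>Words are lists of naturals; a pair (w, n) stands for the basis element [w,n] of W.
  It is admissible iff all letters of w are positive integers and max(w) \<le> n.\<close>

definition Wvalid :: "nat list \<times> nat \<Rightarrow> bool" where
  "Wvalid i \<longleftrightarrow> (\<forall>a\<in>set (fst i). 1 \<le> a \<and> a \<le> snd i)"

text \<open>Elements of W: finitely supported coefficient functions on admissible pairs
  (W is the span of the linearly independent family of all [w,n]).\<close>

definition Wsupp :: "(nat list \<times> nat \<Rightarrow> 'k::zero) \<Rightarrow> (nat list \<times> nat) set" where
  "Wsupp f = {i. f i \<noteq> 0}"

definition Wspace :: "(nat list \<times> nat \<Rightarrow> 'k::zero) set" where
  "Wspace = {f. finite (Wsupp f) \<and> (\<forall>i. f i \<noteq> 0 \<longrightarrow> Wvalid i)}"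

definition Wbasis :: "nat list \<times> nat \<Rightarrow> (nat list \<times> nat \<Rightarrow> 'k::{zero,one})" where
  "Wbasis i = (\<lambda>j. if j = i then 1 else 0)"

fun shuffle_ms :: "nat list \<Rightarrow> nat list \<Rightarrow> nat list multiset" where
  "shuffle_ms [] ys = {#ys#}"
| "shuffle_ms xs [] = {#xs#}"
| "shuffle_ms (x # xs) (y # ys) =
     image_mset (Cons x) (shuffle_ms xs (y # ys)) + image_mset (Cons y) (shuffle_ms (x # xs) ys)"

definition shift_word :: "nat \<Rightarrow> nat list \<Rightarrow> nat list" where
  "shift_word m w = map (\<lambda>a. a + m) w"

text \<open>Product of basis elements: [v,m] * [w,n] = [v \<sqcup>\<sqcup> (w\<up>m), m+n], extended linearly in the word.\<close>

definition Wbprod :: "nat list \<times> nat \<Rightarrow> nat list \<times> nat \<Rightarrow> (nat list \<times> nat \<Rightarrow> 'k::semiring_1)" where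
  "Wbprod a b = (\<lambda>j. if snd j = snd a + snd b
      then of_nat (count (shuffle_ms (fst a) (shift_word (snd a) (fst b))) (fst j)) else 0)"

definition Wmult :: "(nat list \<times> nat \<Rightarrow> 'k::semiring_1) \<Rightarrow> (nat list \<times> nat \<Rightarrow> 'k) \<Rightarrow> (nat list \<times> nat \<Rightarrow> 'k)" where
  "Wmult f g = (\<lambda>j. \<Sum>a\<in>Wsupp f. \<Sum>b\<in>Wsupp g. f a * g b * Wbprod a b j)"

definition Wunit :: "nat list \<times> nat \<Rightarrow> 'k::{zero,one}" where
  "Wunit = Wbasis ([], 0)"

definition Wphi :: "(nat list \<times> nat \<Rightarrow> 'k::field_char_0) \<Rightarrow> 'k" where
  "Wphi f = (\<Sum>i\<in>Wsupp f. f i / fact (length (fst i)))"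

end

theory Submission
  imports Defs
begin

text \<open>Every shuffle of words of lengths p and q has length p + q, and there are
  (p + q choose p) of them counted with multiplicity, so the shuffle [v,m] * [w,n] is sent to
  (p + q choose p) / (p + q)! = 1 / (p! q!), the product of the images of the two factors.\<close>

lemma length_shuffle_ms: "w \<in># shuffle_ms xs ys \<Longrightarrow> length w = length xs + length ys"
  by (induction xs ys arbitrary: w rule: shuffle_ms.induct) auto

lemma size_shuffle_ms: "size (shuffle_ms xs ys) = (length xs + length ys) choose length xs"
  by (induction xs ys rule: shuffle_ms.induct) auto

lemma length_shift_word [simp]: "length (shift_word m w) = length w"
  by (simp add: shift_word_def)

lemma Wphi_eq_sum_superset:
  fixes f :: "nat list \<times> nat \<Rightarrow> 'k::field_char_0"
  assumes "finite S" "Wsupp f \<subseteq> S"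
  shows "Wphi f = (\<Sum>i\<in>S. f i / fact (length (fst i)))"
  unfolding Wphi_def
  by (rule sum.mono_neutral_left[OF assms]) (auto simp: Wsupp_def)

lemma Wphi_Wbasis: "Wphi (Wbasis i :: _ \<Rightarrow> 'k::field_char_0) = 1 / fact (length (fst i))"
proof -
  have "Wsupp (Wbasis i :: _ \<Rightarrow> 'k) = {i}"
    by (auto simp: Wsupp_def Wbasis_def)
  then show ?thesis
    by (simp add: Wphi_def Wbasis_def)
qed

lemma Wphi_Wunit: "Wphi (Wunit :: _ \<Rightarrow> 'k::field_char_0) = 1"
  by (simp add: Wunit_def Wphi_Wbasis)

lemma Wphi_add:
  fixes f g :: "nat list \<times> nat \<Rightarrow> 'k::field_char_0"
  assumes "finite (Wsupp f)" "finite (Wsupp g)"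
  shows "Wphi (\<lambda>j. f j + g j) = Wphi f + Wphi g"
proof -
  let ?S = "Wsupp f \<union> Wsupp g"
  have fin: "finite ?S"
    using assms by simp
  have "Wphi (\<lambda>j. f j + g j) = (\<Sum>i\<in>?S. (f i + g i) / fact (length (fst i)))"
    by (rule Wphi_eq_sum_superset[OF fin]) (auto simp: Wsupp_def)
  also have "\<dots> = (\<Sum>i\<in>?S. f i / fact (length (fst i))) + (\<Sum>i\<in>?S. g i / fact (length (fst i)))"
    by (simp add: add_divide_distrib sum.distrib)
  also have "\<dots> = Wphi f + Wphi g"
    using Wphi_eq_sum_superset[OF fin, of f] Wphi_eq_sum_superset[OF fin, of g] by auto
  finally show ?thesis .
qed

lemma Wphi_scale:
  fixes f :: "nat list \<times> nat \<Rightarrow> 'k::field_char_0"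
  assumes "finite (Wsupp f)"
  shows "Wphi (\<lambda>j. c * f j) = c * Wphi f"
proof -
  have "Wphi (\<lambda>j. c * f j) = (\<Sum>i\<in>Wsupp f. c * f i / fact (length (fst i)))"
    by (rule Wphi_eq_sum_superset[OF assms]) (auto simp: Wsupp_def)
  also have "\<dots> = c * Wphi f"
    by (simp add: Wphi_def sum_distrib_left)
  finally show ?thesis .
qed

lemma Wsupp_Wbprod:
  "Wsupp (Wbprod a b :: _ \<Rightarrow> 'k::semiring_char_0) =
     (\<lambda>w. (w, snd a + snd b)) ` set_mset (shuffle_ms (fst a) (shift_word (snd a) (fst b)))"
  by (auto simp: Wsupp_def Wbprod_def)

lemma Wphi_Wbprod:
  "Wphi (Wbprod a b :: _ \<Rightarrow> 'k::field_char_0) = 1 / (fact (length (fst a)) * fact (length (fst b)))"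
proof -
  define M where "M = shuffle_ms (fst a) (shift_word (snd a) (fst b))"
  define p where "p = length (fst a)"
  define q where "q = length (fst b)"
  have len: "length w = p + q" if "w \<in># M" for w
    using length_shuffle_ms that unfolding M_def p_def q_def by fastforce
  have "Wphi (Wbprod a b :: _ \<Rightarrow> 'k) = (\<Sum>w\<in>set_mset M. (of_nat (count M w) :: 'k) / fact (p + q))"
    unfolding Wphi_def Wsupp_Wbprod M_def[symmetric]
    by (subst sum.reindex) (auto simp: inj_on_def Wbprod_def M_def len intro!: sum.cong)
  also have "\<dots> = of_nat (size M) / fact (p + q)"
    by (simp add: size_multiset_overloaded_eq sum_divide_distrib)
  also have "size M = (p + q) choose p"
    unfolding M_def p_def q_def size_shuffle_ms by simp
  also have "(of_nat ((p + q) choose p) :: 'k) / fact (p + q) = 1 / (fact p * fact q)"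
    by (subst binomial_fact) auto
  finally show ?thesis
    by (simp add: p_def q_def)
qed

lemma Wsupp_Wmult_subset:
  fixes f g :: "nat list \<times> nat \<Rightarrow> 'k::semiring_1"
  shows "Wsupp (Wmult f g) \<subseteq> (\<Union>a\<in>Wsupp f. \<Union>b\<in>Wsupp g. Wsupp (Wbprod a b :: _ \<Rightarrow> 'k))"
proof
  fix j
  assume "j \<in> Wsupp (Wmult f g)"
  then have "(\<Sum>a\<in>Wsupp f. \<Sum>b\<in>Wsupp g. f a * g b * Wbprod a b j) \<noteq> 0"
    by (simp add: Wsupp_def Wmult_def)
  then obtain a where a: "a \<in> Wsupp f"
      and sum_b: "(\<Sum>b\<in>Wsupp g. f a * g b * Wbprod a b j) \<noteq> 0"
    by (rule sum.not_neutral_contains_not_neutral)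
  from sum_b obtain b where b: "b \<in> Wsupp g" and "f a * g b * Wbprod a b j \<noteq> 0"
    by (rule sum.not_neutral_contains_not_neutral)
  then have "Wbprod a b j \<noteq> (0 :: 'k)"
    by (metis mult_zero_right)
  then have "j \<in> Wsupp (Wbprod a b :: _ \<Rightarrow> 'k)"
    by (simp add: Wsupp_def)
  with a b show "j \<in> (\<Union>a\<in>Wsupp f. \<Union>b\<in>Wsupp g. Wsupp (Wbprod a b :: _ \<Rightarrow> 'k))"
    by blast
qed

lemma Wphi_Wmult:
  fixes f g :: "nat list \<times> nat \<Rightarrow> 'k::field_char_0"
  assumes fin_f: "finite (Wsupp f)" and fin_g: "finite (Wsupp g)"
  shows "Wphi (Wmult f g) = Wphi f * Wphi g"
proof -
  let ?A = "Wsupp f" and ?B = "Wsupp g"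
  define T where "T = (\<Union>a\<in>?A. \<Union>b\<in>?B. Wsupp (Wbprod a b :: _ \<Rightarrow> 'k))"
  have fin_T: "finite T"
    unfolding T_def using fin_f fin_g by (auto simp: Wsupp_Wbprod)
  have Wphi_Wbprod_T: "Wphi (Wbprod a b :: _ \<Rightarrow> 'k) = (\<Sum>j\<in>T. Wbprod a b j / fact (length (fst j)))"
    if "a \<in> ?A" "b \<in> ?B" for a b
    by (rule Wphi_eq_sum_superset[OF fin_T]) (use that in \<open>auto simp: T_def\<close>)
  have "Wphi (Wmult f g) = (\<Sum>j\<in>T. Wmult f g j / fact (length (fst j)))"
    by (rule Wphi_eq_sum_superset[OF fin_T]) (use Wsupp_Wmult_subset in \<open>simp add: T_def\<close>)
  also have "\<dots> = (\<Sum>a\<in>?A. \<Sum>b\<in>?B. f a * g b * (\<Sum>j\<in>T. Wbprod a b j / fact (length (fst j))))"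
    unfolding Wmult_def
    by (simp add: sum_divide_distrib sum.swap[of _ T] sum_distrib_left mult.assoc)
  also have "\<dots> = (\<Sum>a\<in>?A. \<Sum>b\<in>?B. f a * g b * Wphi (Wbprod a b :: _ \<Rightarrow> 'k))"
    by (simp add: Wphi_Wbprod_T)
  also have "\<dots> = (\<Sum>a\<in>?A. \<Sum>b\<in>?B. (f a / fact (length (fst a))) * (g b / fact (length (fst b))))"
    by (simp add: Wphi_Wbprod)
  also have "\<dots> = Wphi f * Wphi g"
    unfolding Wphi_def by (simp add: sum_product)
  finally show ?thesis .
qed

theorem corollary3p6:
  shows "(\<forall>i. Wvalid i \<longrightarrow> Wphi (Wbasis i :: nat list \<times> nat \<Rightarrow> 'k::field_char_0) = 1 / fact (length (fst i)))
    \<and> (\<forall>f\<in>Wspace. \<forall>g\<in>Wspace. Wphi (\<lambda>j. f j + g j) = Wphi f + (Wphi g :: 'k))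
    \<and> (\<forall>f\<in>Wspace. \<forall>c. Wphi (\<lambda>j. c * f j) = c * (Wphi f :: 'k))
    \<and> Wphi (Wunit :: nat list \<times> nat \<Rightarrow> 'k) = 1
    \<and> (\<forall>f\<in>Wspace. \<forall>g\<in>Wspace. Wphi (Wmult f g) = Wphi f * (Wphi g :: 'k))"
  by (simp add: Wspace_def Wphi_Wbasis Wphi_add Wphi_scale Wphi_Wunit Wphi_Wmult)

end
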